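(* Let $(A,E)$ be the direct producted noncommutative probability space over $D_N$ of noncommutative probability spaces $(A_1,\varphi_1),\dots,(A_N,\varphi_N)$. For $j=1,\dots,N$ let $A_j'=\{(0,\dots,0,a_j,0,\dots,0):a_j\in A_j\}\subset A$ be the embedding of $A_j$ into the $j$-th coordinate. Then $A_1',\dots,A_N'$ are free over $D_N$ in $(A,E)$.
   Context: Each $(A_j,\varphi_j)$ is a unital complex algebra with a linear functional. $A=\times_{j=1}^N A_j$ with componentwise operations; $D_N=\mathbb{C}^N$ with componentwise operations, identified with the central subalgebra $\{(\alpha_1 1,\dots,\alpha_N 1)\}$ of $A$; $E((a_1,\dots,a_N))=(\varphi_1(a_1),\dots,\varphi_N(a_N))$. $D_N$-valued cumulants: $k_n(y_1,\dots,y_n)=\sum_{\pi\in NC(n)}\prod_{V\in\pi}E(\prod_{l\in V}y_l)\,\mu(\pi,1_n)$. Subsets $S_1,\dots,S_N$ of $A$ are free over $D_N$ if all mixed $D_N$-valued cumulants of elements of the algebras generated by $S_i\cup D_N$ vanish. *)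

theory Defs
  imports Complex_Main "HOL-Library.Disjoint_Sets"
begin

definition unital_calg ::
  "'a set \<Rightarrow> ('a \<Rightarrow> 'a \<Rightarrow> 'a) \<Rightarrow> ('a \<Rightarrow> 'a \<Rightarrow> 'a) \<Rightarrow> (complex \<Rightarrow> 'a \<Rightarrow> 'a)
    \<Rightarrow> 'a \<Rightarrow> 'a \<Rightarrow> bool" where
  "unital_calg C ad mu sm z u \<longleftrightarrow>
     z \<in> C \<and> u \<in> C \<and>
     (\<forall>a\<in>C. \<forall>b\<in>C. ad a b \<in> C \<and> mu a b \<in> C) \<and>
     (\<forall>c. \<forall>a\<in>C. sm c a \<in> C) \<and>
     (\<forall>a\<in>C. \<forall>b\<in>C. \<forall>d\<in>C. ad (ad a b) d = ad a (ad b d)) \<and>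
     (\<forall>a\<in>C. \<forall>b\<in>C. ad a b = ad b a) \<and>
     (\<forall>a\<in>C. ad z a = a) \<and>
     (\<forall>a\<in>C. \<exists>b\<in>C. ad a b = z) \<and>
     (\<forall>a\<in>C. \<forall>b\<in>C. \<forall>d\<in>C. mu (mu a b) d = mu a (mu b d)) \<and>
     (\<forall>a\<in>C. mu u a = a \<and> mu a u = a) \<and>
     (\<forall>a\<in>C. \<forall>b\<in>C. \<forall>d\<in>C. mu a (ad b d) = ad (mu a b) (mu a d)
                          \<and> mu (ad a b) d = ad (mu a d) (mu b d)) \<and>
     (\<forall>a\<in>C. sm 1 a = a) \<and>
     (\<forall>c e. \<forall>a\<in>C. sm (c * e) a = sm c (sm e a)) \<and>
     (\<forall>c e. \<forall>a\<in>C. sm (c + e) a = ad (sm c a) (sm e a)) \<and>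
     (\<forall>c. \<forall>a\<in>C. \<forall>b\<in>C. sm c (ad a b) = ad (sm c a) (sm c b)) \<and>
     (\<forall>c. \<forall>a\<in>C. \<forall>b\<in>C. mu (sm c a) b = sm c (mu a b) \<and> mu a (sm c b) = sm c (mu a b))"

definition nc_prob_space ::
  "'a set \<Rightarrow> ('a \<Rightarrow> 'a \<Rightarrow> 'a) \<Rightarrow> ('a \<Rightarrow> 'a \<Rightarrow> 'a) \<Rightarrow> (complex \<Rightarrow> 'a \<Rightarrow> 'a)
    \<Rightarrow> 'a \<Rightarrow> 'a \<Rightarrow> ('a \<Rightarrow> complex) \<Rightarrow> bool" where
  "nc_prob_space C ad mu sm z u phi \<longleftrightarrow>
     unital_calg C ad mu sm z u \<and>
     (\<forall>a\<in>C. \<forall>b\<in>C. phi (ad a b) = phi a + phi b) \<and>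
     (\<forall>c. \<forall>a\<in>C. phi (sm c a) = c * phi a) \<and>
     phi u = 1"

definition noncrossing :: "nat set set \<Rightarrow> bool" where
  "noncrossing P \<longleftrightarrow>
     (\<forall>V\<in>P. \<forall>W\<in>P. \<forall>a b c d. a < b \<and> b < c \<and> c < d \<and> a \<in> V \<and> c \<in> V
        \<and> b \<in> W \<and> d \<in> W \<longrightarrow> V = W)"

text \<open>NC(n): non-crossing partitions of {0..<n} (positions 0..n-1 stand for 1..n).\<close>
definition NC :: "nat \<Rightarrow> nat set set set" where
  "NC n = {P. partition_on {0..<n} P \<and> noncrossing P}"

definition refines :: "nat set set \<Rightarrow> nat set set \<Rightarrow> bool" where
  "refines P Q \<longleftrightarrow> (\<forall>V\<in>P. \<exists>W\<in>Q. V \<subseteq> W)"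

definition one_part :: "nat \<Rightarrow> nat set set" where
  "one_part n = (if n = 0 then {} else {{0..<n}})"

text \<open>The recursion is run with a fuel parameter; every strict chain in NC(n) has length
  at most n, so fuel n+1 suffices for the recursion to bottom out correctly.\<close>
fun mob_aux :: "nat \<Rightarrow> nat \<Rightarrow> nat set set \<Rightarrow> int" where
  "mob_aux 0 n P = 0"
| "mob_aux (Suc k) n P =
     (if P = one_part n then 1
      else - (\<Sum>Q\<in>{Q\<in>NC n. refines P Q \<and> Q \<noteq> P}. mob_aux k n Q))"

definition mobius_NC :: "nat \<Rightarrow> nat set set \<Rightarrow> int" where
  "mobius_NC n P = mob_aux (Suc n) n P"

text \<open>Index type 'i is the finite set {1..N}. Algebra j has carrier C j and operations
  ad j, mu j, sm j, z j, u j on a common element type 'a. Elements of A are functions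
  'i \<Rightarrow> 'a with componentwise operations; D_N = ('i \<Rightarrow> complex).\<close>

definition prodA_carrier :: "('i \<Rightarrow> 'a set) \<Rightarrow> ('i \<Rightarrow> 'a) set" where
  "prodA_carrier C = {x. \<forall>j. x j \<in> C j}"

text \<open>Embedding of D_N as the central subalgebra {(alpha_1 1,...,alpha_N 1)}.\<close>
definition embD :: "('i \<Rightarrow> complex \<Rightarrow> 'a \<Rightarrow> 'a) \<Rightarrow> ('i \<Rightarrow> 'a) \<Rightarrow> ('i \<Rightarrow> complex) \<Rightarrow> ('i \<Rightarrow> 'a)" where
  "embD sm u d = (\<lambda>j. sm j (d j) (u j))"

definition condE :: "('i \<Rightarrow> 'a \<Rightarrow> complex) \<Rightarrow> ('i \<Rightarrow> 'a) \<Rightarrow> ('i \<Rightarrow> complex)" where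
  "condE phi x = (\<lambda>j. phi j (x j))"

definition ordprodA :: "('i \<Rightarrow> 'a \<Rightarrow> 'a \<Rightarrow> 'a) \<Rightarrow> ('i \<Rightarrow> 'a) \<Rightarrow> (nat \<Rightarrow> ('i \<Rightarrow> 'a)) \<Rightarrow> nat set \<Rightarrow> ('i \<Rightarrow> 'a)" where
  "ordprodA mu u y V = (\<lambda>j. foldr (mu j) (map (\<lambda>l. y l j) (sorted_list_of_set V)) (u j))"

definition cumulant ::
  "('i \<Rightarrow> 'a \<Rightarrow> 'a \<Rightarrow> 'a) \<Rightarrow> ('i \<Rightarrow> 'a) \<Rightarrow> ('i \<Rightarrow> 'a \<Rightarrow> complex)
     \<Rightarrow> nat \<Rightarrow> (nat \<Rightarrow> ('i \<Rightarrow> 'a)) \<Rightarrow> ('i \<Rightarrow> complex)" where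
  "cumulant mu u phi n y =
     (\<lambda>j. \<Sum>P\<in>NC n. (\<Prod>V\<in>P. condE phi (ordprodA mu u y V) j) * of_int (mobius_NC n P))"

inductive_set gen_alg_D ::
  "('i \<Rightarrow> 'a \<Rightarrow> 'a \<Rightarrow> 'a) \<Rightarrow> ('i \<Rightarrow> 'a \<Rightarrow> 'a \<Rightarrow> 'a) \<Rightarrow> ('i \<Rightarrow> complex \<Rightarrow> 'a \<Rightarrow> 'a)
     \<Rightarrow> ('i \<Rightarrow> 'a) \<Rightarrow> ('i \<Rightarrow> 'a) \<Rightarrow> ('i \<Rightarrow> 'a) set \<Rightarrow> ('i \<Rightarrow> 'a) set"
  for ad mu sm z u S where
  gen: "x \<in> S \<Longrightarrow> x \<in> gen_alg_D ad mu sm z u S"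
| scal: "embD sm u d \<in> gen_alg_D ad mu sm z u S"
| zero: "z \<in> gen_alg_D ad mu sm z u S"
| add: "x \<in> gen_alg_D ad mu sm z u S \<Longrightarrow> y \<in> gen_alg_D ad mu sm z u S
          \<Longrightarrow> (\<lambda>j. ad j (x j) (y j)) \<in> gen_alg_D ad mu sm z u S"
| mult: "x \<in> gen_alg_D ad mu sm z u S \<Longrightarrow> y \<in> gen_alg_D ad mu sm z u S
          \<Longrightarrow> (\<lambda>j. mu j (x j) (y j)) \<in> gen_alg_D ad mu sm z u S"
| smul: "x \<in> gen_alg_D ad mu sm z u S
          \<Longrightarrow> (\<lambda>j. sm j c (x j)) \<in> gen_alg_D ad mu sm z u S"

text \<open>Subsets S_i (i \<in> 'i) of A are free over D_N: all mixed D_N-valued cumulants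
  of elements of the algebras generated by S_i \<union> D_N vanish.\<close>
definition free_over_D ::
  "('i \<Rightarrow> 'a \<Rightarrow> 'a \<Rightarrow> 'a) \<Rightarrow> ('i \<Rightarrow> 'a \<Rightarrow> 'a \<Rightarrow> 'a) \<Rightarrow> ('i \<Rightarrow> complex \<Rightarrow> 'a \<Rightarrow> 'a)
     \<Rightarrow> ('i \<Rightarrow> 'a) \<Rightarrow> ('i \<Rightarrow> 'a) \<Rightarrow> ('i \<Rightarrow> 'a \<Rightarrow> complex)
     \<Rightarrow> ('i \<Rightarrow> ('i \<Rightarrow> 'a) set) \<Rightarrow> bool" where
  "free_over_D ad mu sm z u phi S \<longleftrightarrow>
     (\<forall>n (c :: nat \<Rightarrow> 'i) y.
        (\<forall>l<n. y l \<in> gen_alg_D ad mu sm z u (S (c l))) \<and>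
        (\<exists>l1<n. \<exists>l2<n. c l1 \<noteq> c l2)
        \<longrightarrow> cumulant mu u phi n y = (\<lambda>_. 0))"

definition coord_embed :: "('i \<Rightarrow> 'a set) \<Rightarrow> ('i \<Rightarrow> 'a) \<Rightarrow> 'i \<Rightarrow> ('i \<Rightarrow> 'a) set" where
  "coord_embed C z j = {x. x j \<in> C j \<and> (\<forall>i. i \<noteq> j \<longrightarrow> x i = z i)}"

end

theory Submission
  imports Defs
begin

text \<open>In coordinate \<open>j\<close>, every element of the algebra generated by \<open>A'\<^sub>i \<union> D\<^sub>N\<close> with
  \<open>i \<noteq> j\<close> is a scalar multiple of the unit, and the \<open>D\<^sub>N\<close>-valued cumulants are computed
  coordinatewise by the scalar free cumulants. So in every coordinate a mixed cumulant has a
  scalar argument at some position \<open>l\<close>; pulling the scalar out leaves a cumulant whose moments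
  do not see position \<open>l\<close>. Such a cumulant vanishes for \<open>n \<ge> 2\<close>: group the non-crossing
  partitions according to the partition obtained by isolating \<open>l\<close> as a singleton block; the
  Moebius sum over each fibre vanishes, by induction on the number of blocks using the
  defining recursion of the Moebius function.\<close>

lemma partition_on_block_unique:
  assumes "partition_on A P" "V \<in> P" "W \<in> P" "x \<in> V" "x \<in> W"
  shows "V = W"
  using assms unfolding partition_on_def disjoint_def by blast

lemma partition_on_refines_card_less:
  assumes P: "partition_on A P" and Q: "partition_on A Q" and "finite A"
    and "refines P Q" and "P \<noteq> Q"
  shows "card Q < card P"
proof -
  have "finite P" using finite_elements[OF \<open>finite A\<close> P] .
  define f where "f V = (THE W. W \<in> Q \<and> V \<subseteq> W)" for V
  have f: "f V \<in> Q \<and> V \<subseteq> f V" if "V \<in> P" for V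
  proof -
    obtain W where W: "W \<in> Q" "V \<subseteq> W"
      using \<open>refines P Q\<close> \<open>V \<in> P\<close> unfolding refines_def by blast
    have "V \<noteq> {}" using partition_onD3[OF P] \<open>V \<in> P\<close> by blast
    then have "f V = W"
      unfolding f_def using W partition_on_block_unique[OF Q] by (intro the_equality) blast+
    then show ?thesis using W by simp
  qed
  have f_onto: "f ` P = Q"
  proof (intro equalityI subsetI)
    show "W \<in> Q" if "W \<in> f ` P" for W using that f by blast
    fix W assume "W \<in> Q"
    then obtain x where "x \<in> W" using partition_onD3[OF Q] by (metis ex_in_conv)
    then obtain V where "V \<in> P" "x \<in> V"
      using partition_onD1[OF P] partition_onD1[OF Q] \<open>W \<in> Q\<close> by blast
    then have "f V = W" using f \<open>x \<in> W\<close> \<open>W \<in> Q\<close> partition_on_block_unique[OF Q] by blast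
    then show "W \<in> f ` P" using \<open>V \<in> P\<close> by blast
  qed
  have "card Q \<noteq> card P"
  proof
    assume "card Q = card P"
    then have "inj_on f P" by (intro eq_card_imp_inj_on[OF \<open>finite P\<close>]) (simp add: f_onto)
    have "f V = V" if "V \<in> P" for V
    proof -
      have "x \<in> V" if "x \<in> f V" for x
      proof -
        obtain V' where "V' \<in> P" "x \<in> V'"
          using partition_onD1[OF P] partition_onD1[OF Q] f \<open>V \<in> P\<close> \<open>x \<in> f V\<close> by blast
        then have "f V' = f V"
          using f \<open>V \<in> P\<close> \<open>x \<in> f V\<close> partition_on_block_unique[OF Q] by blast
        then show "x \<in> V" using \<open>inj_on f P\<close> \<open>V \<in> P\<close> \<open>V' \<in> P\<close> \<open>x \<in> V'\<close> by (auto dest: inj_onD)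
      qed
      then show ?thesis using f[OF \<open>V \<in> P\<close>] by blast
    qed
    then have "f ` P = P" by simp
    then show False using f_onto \<open>P \<noteq> Q\<close> by simp
  qed
  moreover have "card Q \<le> card P" using card_image_le[OF \<open>finite P\<close>, of f] f_onto by simp
  ultimately show ?thesis by simp
qed

lemma partition_on_card_le:
  assumes P: "partition_on A P" and "finite A"
  shows "card P \<le> card A"
proof -
  have fin: "finite V" if "V \<in> P" for V
    using that partition_onD1[OF P] \<open>finite A\<close> by (blast intro: finite_subset)
  have "card P = (\<Sum>V\<in>P. 1)" by simp
  also have "\<dots> \<le> (\<Sum>V\<in>P. card V)"
    using partition_onD3[OF P] fin by (intro sum_mono) (metis One_nat_def Suc_leI card_gt_0_iff)
  also have "\<dots> = card A"
    using card_Union_disjoint[OF partition_onD2[OF P]] fin partition_onD1[OF P] by simp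
  finally show ?thesis .
qed

lemma finite_NC: "finite (NC n)"
  by (rule finite_subset[OF _ finitely_many_partition_on[of "{0..<n}"]]) (auto simp: NC_def)

lemma NC_partition_on: "P \<in> NC n \<Longrightarrow> partition_on {0..<n} P"
  unfolding NC_def by simp

lemma NC_card_le: "P \<in> NC n \<Longrightarrow> card P \<le> n"
  using partition_on_card_le[OF NC_partition_on] by fastforce

lemma NC_refines_card_less:
  "P \<in> NC n \<Longrightarrow> Q \<in> NC n \<Longrightarrow> refines P Q \<Longrightarrow> P \<noteq> Q \<Longrightarrow> card Q < card P"
  using partition_on_refines_card_less[OF NC_partition_on NC_partition_on] by blast

lemma NC_refines_one_part:
  assumes "Q \<in> NC n" and "refines (one_part n) Q"
  shows "Q = one_part n"
proof -
  have Q: "partition_on {0..<n} Q" using NC_partition_on[OF \<open>Q \<in> NC n\<close>] .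
  show ?thesis
  proof (cases "n = 0")
    case True
    then show ?thesis using Q by (simp add: one_part_def partition_on_empty)
  next
    case False
    then obtain W where "W \<in> Q" "{0..<n} \<subseteq> W"
      using \<open>refines (one_part n) Q\<close> unfolding refines_def one_part_def by auto
    have UQ: "\<Union>Q = {0..<n}" using partition_onD1[OF Q] by simp
    then have W: "W = {0..<n}" using Union_upper[OF \<open>W \<in> Q\<close>] \<open>{0..<n} \<subseteq> W\<close> by simp
    have "W' = W" if "W' \<in> Q" for W'
    proof -
      obtain x where "x \<in> W'" using partition_onD3[OF Q] \<open>W' \<in> Q\<close> by (metis ex_in_conv)
      moreover have "x \<in> W" using W UQ \<open>x \<in> W'\<close> \<open>W' \<in> Q\<close> by blast
      ultimately show ?thesis using partition_on_block_unique[OF Q \<open>W' \<in> Q\<close> \<open>W \<in> Q\<close>] by blast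
    qed
    then have "Q = {W}" using \<open>W \<in> Q\<close> by blast
    then show ?thesis using W False by (simp add: one_part_def)
  qed
qed

lemma mob_aux_fuel_eq:
  assumes "Q \<in> NC n" "card Q < k" "card Q < k'"
  shows "mob_aux k n Q = mob_aux k' n Q"
  using assms
proof (induction k arbitrary: Q k')
  case 0
  then show ?case by simp
next
  case (Suc k)
  obtain k'' where k': "k' = Suc k''" using Suc.prems(3) by (cases k') auto
  have "mob_aux k n R = mob_aux k'' n R" if "R \<in> {R \<in> NC n. refines Q R \<and> R \<noteq> Q}" for R
  proof -
    have "card R < card Q" using that NC_refines_card_less[OF Suc.prems(1)] by blast
    then show ?thesis using Suc.IH[of R k''] Suc.prems that k' by simp
  qed
  then have "(\<Sum>R\<in>{R \<in> NC n. refines Q R \<and> R \<noteq> Q}. mob_aux k n R)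
      = (\<Sum>R\<in>{R \<in> NC n. refines Q R \<and> R \<noteq> Q}. mob_aux k'' n R)"
    by (rule sum.cong[OF refl])
  then show ?case by (simp add: k')
qed

lemma sum_mobius_NC_refines:
  assumes P: "P \<in> NC n"
  shows "(\<Sum>Q\<in>{Q \<in> NC n. refines P Q}. mobius_NC n Q) = (if P = one_part n then 1 else 0)"
proof (cases "P = one_part n")
  case True
  then have "{Q \<in> NC n. refines P Q} = {P}"
    using P NC_refines_one_part by (auto simp: refines_def)
  then show ?thesis using True by (simp add: mobius_NC_def)
next
  case False
  let ?U = "{Q \<in> NC n. refines P Q \<and> Q \<noteq> P}"
  have "mobius_NC n P = - (\<Sum>Q\<in>?U. mob_aux n n Q)"
    using False by (simp add: mobius_NC_def)
  also have "(\<Sum>Q\<in>?U. mob_aux n n Q) = (\<Sum>Q\<in>?U. mobius_NC n Q)"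
  proof (rule sum.cong[OF refl])
    fix Q assume "Q \<in> ?U"
    then have "card Q < n" using NC_refines_card_less[OF P] NC_card_le[OF P] by fastforce
    then show "mob_aux n n Q = mobius_NC n Q"
      unfolding mobius_NC_def using mob_aux_fuel_eq[of Q n n "Suc n"] \<open>Q \<in> ?U\<close> by simp
  qed
  finally have "mobius_NC n P + (\<Sum>Q\<in>?U. mobius_NC n Q) = 0" by simp
  moreover have "{Q \<in> NC n. refines P Q} = insert P ?U"
    using P by (auto simp: refines_def)
  ultimately show ?thesis using False finite_NC by simp
qed

definition isolate :: "'a \<Rightarrow> 'a set set \<Rightarrow> 'a set set" where
  "isolate l P = insert {l} ((\<lambda>V. V - {l}) ` P - {{}})"

lemma partition_on_isolate:
  assumes "partition_on A P" "l \<in> A"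
  shows "partition_on A (isolate l P)"
proof -
  have "partition_on (A - {l}) ((\<lambda>V. V - {l}) ` P - {{}})"
    by (rule partition_on_transform[OF assms(1), of "\<lambda>V. V - {l}"]) (auto simp: disjnt_def)
  then show ?thesis
    unfolding isolate_def using assms(2) by (subst partition_on_insert) (auto simp: disjnt_def)
qed

lemma noncrossing_isolate:
  assumes "noncrossing P"
  shows "noncrossing (isolate l P)"
  unfolding noncrossing_def
proof (intro ballI allI impI)
  fix V' W' a b c d
  assume "V' \<in> isolate l P" "W' \<in> isolate l P"
    and abcd: "a < b \<and> b < c \<and> c < d \<and> a \<in> V' \<and> c \<in> V' \<and> b \<in> W' \<and> d \<in> W'"
  moreover have "V' \<noteq> {l}" "W' \<noteq> {l}" using abcd by auto
  ultimately obtain V W where "V \<in> P" "V' = V - {l}" "W \<in> P" "W' = W - {l}"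
    unfolding isolate_def by blast
  then show "V' = W'" using assms abcd unfolding noncrossing_def by blast
qed

lemma isolate_NC: "P \<in> NC n \<Longrightarrow> l < n \<Longrightarrow> isolate l P \<in> NC n"
  unfolding NC_def by (auto intro: partition_on_isolate noncrossing_isolate)

lemma singleton_in_isolate: "{l} \<in> isolate l P"
  unfolding isolate_def by simp

lemma refines_isolate:
  assumes "partition_on A P" "l \<in> A"
  shows "refines (isolate l P) P"
  using partition_onD1[OF assms(1)] assms(2) unfolding refines_def isolate_def by blast

lemma refines_isolate_iff:
  assumes S: "partition_on A S" "{l} \<in> S" and Q: "partition_on A Q" and "l \<in> A"
  shows "refines S (isolate l Q) \<longleftrightarrow> refines S Q"
proof
  assume "refines S (isolate l Q)"
  then show "refines S Q"
    using refines_isolate[OF Q \<open>l \<in> A\<close>] unfolding refines_def by (meson order_trans)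
next
  assume SQ: "refines S Q"
  show "refines S (isolate l Q)"
    unfolding refines_def
  proof
    fix V assume "V \<in> S"
    show "\<exists>W\<in>isolate l Q. V \<subseteq> W"
    proof (cases "V = {l}")
      case True
      show ?thesis by (rule bexI[OF _ singleton_in_isolate]) (simp add: True)
    next
      case False
      then have "l \<notin> V" using partition_on_block_unique[OF S(1) \<open>V \<in> S\<close> S(2)] by blast
      obtain W where "W \<in> Q" "V \<subseteq> W" using SQ \<open>V \<in> S\<close> unfolding refines_def by blast
      moreover have "V \<noteq> {}" using partition_onD3[OF S(1)] \<open>V \<in> S\<close> by blast
      ultimately have "W - {l} \<in> isolate l Q" "V \<subseteq> W - {l}"
        using \<open>l \<notin> V\<close> unfolding isolate_def by auto
      then show ?thesis by blast
    qed
  qed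
qed

lemma prod_isolate:
  fixes H :: "'a set \<Rightarrow> 'b::comm_monoid_mult"
  assumes P: "partition_on A P" and "finite A"
    and H: "\<And>V. H (V - {l}) = H V" and "H {} = 1"
  shows "(\<Prod>V\<in>isolate l P. H V) = (\<Prod>V\<in>P. H V)"
proof -
  have "finite P" using finite_elements[OF \<open>finite A\<close> P] .
  let ?F = "(\<lambda>V. V - {l}) ` P"
  have inj: "inj_on (\<lambda>V. V - {l}) P"
  proof (rule inj_onI)
    fix V W assume "V \<in> P" "W \<in> P" and eq: "V - {l} = W - {l}"
    show "V = W"
    proof (rule ccontr)
      assume "V \<noteq> W"
      then have "V \<inter> W = {}" using partition_onD2[OF P] \<open>V \<in> P\<close> \<open>W \<in> P\<close> by (simp add: disjointD)
      then have "V \<subseteq> {l}" "W \<subseteq> {l}" using eq by blast+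
      moreover have "V \<noteq> {}" "W \<noteq> {}" using partition_onD3[OF P] \<open>V \<in> P\<close> \<open>W \<in> P\<close> by blast+
      ultimately show False using \<open>V \<noteq> W\<close> by blast
    qed
  qed
  have "{l} \<notin> ?F" by blast
  have "(\<Prod>V\<in>isolate l P. H V) = H {l} * (\<Prod>V\<in>?F - {{}}. H V)"
    unfolding isolate_def by (rule prod.insert) (use \<open>finite P\<close> \<open>{l} \<notin> ?F\<close> in simp_all)
  also have "\<dots> = (\<Prod>V\<in>?F. H V)"
  proof -
    have "H {l} = 1" using H[of "{l}"] \<open>H {} = 1\<close> by (simp only: Diff_cancel)
    moreover have "(\<Prod>V\<in>?F - {{}}. H V) = (\<Prod>V\<in>?F. H V)"
      using \<open>H {} = 1\<close> by (intro prod.mono_neutral_left[OF finite_imageI[OF \<open>finite P\<close>]]) auto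
    ultimately show ?thesis by simp
  qed
  also have "\<dots> = (\<Prod>V\<in>P. H (V - {l}))"
    using prod.reindex[OF inj, of H] by (simp add: comp_def)
  also have "\<dots> = (\<Prod>V\<in>P. H V)" using H by simp
  finally show ?thesis by simp
qed

lemma sum_mobius_isolate_fibre_eq_0:
  assumes "2 \<le> n" "l < n" "S \<in> NC n" "{l} \<in> S"
  shows "(\<Sum>P\<in>{P \<in> NC n. isolate l P = S}. mobius_NC n P) = 0"
  using assms(3,4)
proof (induction "card S" arbitrary: S rule: less_induct)
  case less
  define fibre where "fibre S' = (\<Sum>P\<in>{P \<in> NC n. isolate l P = S'}. mobius_NC n P)" for S'
  let ?R = "{Q \<in> NC n. refines S Q}"
  let ?T = "{S' \<in> NC n. {l} \<in> S' \<and> refines S S'}"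
  have S: "partition_on {0..<n} S" using NC_partition_on[OF less.prems(1)] .
  have refines_iff: "refines S (isolate l Q) \<longleftrightarrow> refines S Q" if "Q \<in> NC n" for Q
    using refines_isolate_iff[OF S less.prems(2) NC_partition_on[OF that]] \<open>l < n\<close> by simp
  have "S \<noteq> one_part n"
  proof
    assume "S = one_part n"
    then have "{l} = {0..<n}" using less.prems(2) \<open>2 \<le> n\<close> by (simp add: one_part_def)
    moreover have "0 \<in> {0..<n}" "1 \<in> {0..<n}" using \<open>2 \<le> n\<close> by simp_all
    ultimately show False by (metis singletonD zero_neq_one)
  qed
  have rest: "(\<Sum>S'\<in>?T - {S}. fibre S') = 0"
  proof (rule sum.neutral, rule ballI)
    fix S' assume "S' \<in> ?T - {S}"
    then have "card S' < card S" using NC_refines_card_less[OF less.prems(1)] by blast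
    then show "fibre S' = 0" using less.hyps \<open>S' \<in> ?T - {S}\<close> unfolding fibre_def by blast
  qed
  have "0 = (\<Sum>Q\<in>?R. mobius_NC n Q)"
    using sum_mobius_NC_refines[OF less.prems(1)] \<open>S \<noteq> one_part n\<close> by simp
  also have "\<dots> = (\<Sum>S'\<in>?T. \<Sum>Q\<in>{Q \<in> ?R. isolate l Q = S'}. mobius_NC n Q)"
    by (rule sum.group[symmetric])
      (use finite_NC isolate_NC[OF _ \<open>l < n\<close>] singleton_in_isolate refines_iff in auto)
  also have "\<dots> = (\<Sum>S'\<in>?T. fibre S')"
  proof (rule sum.cong[OF refl])
    fix S' assume "S' \<in> ?T"
    then have "{Q \<in> ?R. isolate l Q = S'} = {P \<in> NC n. isolate l P = S'}"
      using refines_iff by blast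
    then show "(\<Sum>Q\<in>{Q \<in> ?R. isolate l Q = S'}. mobius_NC n Q) = fibre S'"
      unfolding fibre_def by simp
  qed
  also have "\<dots> = fibre S + (\<Sum>S'\<in>?T - {S}. fibre S')"
    using less.prems finite_NC by (intro sum.remove) (auto simp: refines_def)
  finally show ?case using rest unfolding fibre_def by simp
qed

lemma sum_NC_prod_mobius_eq_0:
  fixes H :: "nat set \<Rightarrow> 'a::comm_ring_1"
  assumes "2 \<le> n" "l < n" and H: "\<And>V. H (V - {l}) = H V" and "H {} = 1"
  shows "(\<Sum>P\<in>NC n. (\<Prod>V\<in>P. H V) * of_int (mobius_NC n P)) = 0"
proof -
  let ?T = "{S \<in> NC n. {l} \<in> S}"
  let ?fibre = "\<lambda>S. {P \<in> NC n. isolate l P = S}"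
  have "(\<Sum>P\<in>NC n. (\<Prod>V\<in>P. H V) * of_int (mobius_NC n P))
      = (\<Sum>S\<in>?T. \<Sum>P\<in>?fibre S. (\<Prod>V\<in>P. H V) * of_int (mobius_NC n P))"
    by (rule sum.group[symmetric])
      (use finite_NC isolate_NC[OF _ \<open>l < n\<close>] singleton_in_isolate in auto)
  also have "\<dots> = (\<Sum>S\<in>?T. (\<Prod>V\<in>S. H V) * of_int (\<Sum>P\<in>?fibre S. mobius_NC n P))"
  proof (rule sum.cong[OF refl])
    fix S
    have "(\<Prod>V\<in>P. H V) = (\<Prod>V\<in>S. H V)" if "P \<in> ?fibre S" for P
      using that prod_isolate[OF NC_partition_on[of P n] finite_atLeastLessThan H \<open>H {} = 1\<close>]
      by simp
    then have "(\<Sum>P\<in>?fibre S. (\<Prod>V\<in>P. H V) * of_int (mobius_NC n P))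
        = (\<Sum>P\<in>?fibre S. (\<Prod>V\<in>S. H V) * of_int (mobius_NC n P))"
      by (intro sum.cong) simp_all
    then show "(\<Sum>P\<in>?fibre S. (\<Prod>V\<in>P. H V) * of_int (mobius_NC n P))
        = (\<Prod>V\<in>S. H V) * of_int (\<Sum>P\<in>?fibre S. mobius_NC n P)"
      by (simp add: sum_distrib_left)
  qed
  also have "\<dots> = 0"
    using sum_mobius_isolate_fibre_eq_0[OF \<open>2 \<le> n\<close> \<open>l < n\<close>] by simp
  finally show ?thesis .
qed

context
  fixes C :: "'a set" and ad mu :: "'a \<Rightarrow> 'a \<Rightarrow> 'a" and sm :: "complex \<Rightarrow> 'a \<Rightarrow> 'a"
    and z u :: 'a
  assumes alg: "unital_calg C ad mu sm z u"
begin

lemma calg_zero_closed: "z \<in> C"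
  using alg unfolding unital_calg_def by meson

lemma calg_unit_closed: "u \<in> C"
  using alg unfolding unital_calg_def by meson

lemma calg_add_closed: "a \<in> C \<Longrightarrow> b \<in> C \<Longrightarrow> ad a b \<in> C"
  using alg unfolding unital_calg_def by meson

lemma calg_mult_closed: "a \<in> C \<Longrightarrow> b \<in> C \<Longrightarrow> mu a b \<in> C"
  using alg unfolding unital_calg_def by meson

lemma calg_scale_closed: "a \<in> C \<Longrightarrow> sm c a \<in> C"
  using alg unfolding unital_calg_def by meson

lemma calg_mult_unit_left: "a \<in> C \<Longrightarrow> mu u a = a"
  using alg unfolding unital_calg_def by meson

lemma calg_scale_mult_left: "a \<in> C \<Longrightarrow> b \<in> C \<Longrightarrow> mu (sm c a) b = sm c (mu a b)"
  using alg unfolding unital_calg_def by meson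

lemma calg_scale_mult_right: "a \<in> C \<Longrightarrow> b \<in> C \<Longrightarrow> mu a (sm c b) = sm c (mu a b)"
  using alg unfolding unital_calg_def by meson

lemma calg_scale_scale: "a \<in> C \<Longrightarrow> sm c (sm e a) = sm (c * e) a"
  using alg unfolding unital_calg_def by metis

lemma calg_scale_add: "a \<in> C \<Longrightarrow> ad (sm c a) (sm e a) = sm (c + e) a"
  using alg unfolding unital_calg_def by metis

lemma calg_scale_0:
  assumes "a \<in> C"
  shows "sm 0 a = z"
proof -
  let ?w = "sm 0 a"
  have w: "?w \<in> C" using calg_scale_closed[OF assms] .
  obtain b where "b \<in> C" "ad ?w b = z"
    using alg w unfolding unital_calg_def by meson
  have "z = ad (ad ?w ?w) b" using calg_scale_add[OF assms, of 0 0] \<open>ad ?w b = z\<close> by simp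
  also have "\<dots> = ad ?w z"
    using alg w \<open>b \<in> C\<close> \<open>ad ?w b = z\<close> unfolding unital_calg_def by metis
  also have "\<dots> = ?w"
    using alg w calg_zero_closed unfolding unital_calg_def by metis
  finally show ?thesis by simp
qed

lemma calg_scale_unit_mult: "mu (sm c u) (sm e u) = sm (c * e) u"
  using calg_scale_mult_left calg_mult_unit_left calg_scale_closed calg_scale_scale calg_unit_closed
  by simp

lemma foldr_mult_closed: "set xs \<subseteq> C \<Longrightarrow> w \<in> C \<Longrightarrow> foldr mu xs w \<in> C"
  by (induction xs) (auto intro: calg_mult_closed)

lemma foldr_mult_pull_scalar:
  assumes "distinct xs" "l \<in> set xs" "a l = sm \<alpha> u" "\<And>k. k \<in> set xs \<Longrightarrow> a k \<in> C"
  shows "foldr mu (map a xs) u = sm \<alpha> (foldr mu (map a (remove1 l xs)) u)"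
  using assms
proof (induction xs)
  case Nil
  then show ?case by simp
next
  case (Cons x xs)
  have w: "foldr mu (map a (remove1 l xs)) u \<in> C"
    using Cons.prems(4) set_remove1_subset[of l xs] by (intro foldr_mult_closed calg_unit_closed) auto
  show ?case
  proof (cases "x = l")
    case True
    then have "remove1 l xs = xs" using Cons.prems(1) by (simp add: remove1_idem)
    then show ?thesis
      using True w Cons.prems(3) calg_scale_mult_left[OF calg_unit_closed w] calg_mult_unit_left[OF w]
      by simp
  next
    case False
    then have "foldr mu (map a xs) u = sm \<alpha> (foldr mu (map a (remove1 l xs)) u)"
      using Cons by simp
    then show ?thesis
      using False Cons.prems(4) calg_scale_mult_right[OF _ w] by simp
  qed
qed

lemma prod_blocks_pull_scalar:
  fixes phi :: "'a \<Rightarrow> complex"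
  assumes phi_scale: "\<And>c x. x \<in> C \<Longrightarrow> phi (sm c x) = c * phi x"
    and P: "partition_on A P" and "finite A" and "l \<in> A"
    and a: "\<And>k. k \<in> A \<Longrightarrow> a k \<in> C" and "a l = sm \<alpha> u"
  shows "(\<Prod>V\<in>P. phi (foldr mu (map a (sorted_list_of_set V)) u))
       = \<alpha> * (\<Prod>V\<in>P. phi (foldr mu (map a (sorted_list_of_set (V - {l}))) u))"
proof -
  let ?f = "\<lambda>V. phi (foldr mu (map a (sorted_list_of_set V)) u)"
  let ?g = "\<lambda>V. phi (foldr mu (map a (sorted_list_of_set (V - {l}))) u)"
  have "finite P" using finite_elements[OF \<open>finite A\<close> P] .
  have V: "V \<subseteq> A" "finite V" if "V \<in> P" for V
    using that partition_onD1[OF P] \<open>finite A\<close> by (auto intro: finite_subset)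
  obtain V0 where "V0 \<in> P" "l \<in> V0" using partition_onD1[OF P] \<open>l \<in> A\<close> by blast
  have "?f V0 = \<alpha> * ?g V0"
  proof -
    have aV0: "a k \<in> C" if "k \<in> V0" for k using that V(1)[OF \<open>V0 \<in> P\<close>] a by blast
    have "foldr mu (map a (sorted_list_of_set V0)) u
        = sm \<alpha> (foldr mu (map a (sorted_list_of_set (V0 - {l}))) u)"
      unfolding sorted_list_of_set_remove[OF V(2)[OF \<open>V0 \<in> P\<close>]]
      using V(2)[OF \<open>V0 \<in> P\<close>] \<open>l \<in> V0\<close> aV0 \<open>a l = sm \<alpha> u\<close>
      by (intro foldr_mult_pull_scalar) auto
    moreover have "foldr mu (map a (sorted_list_of_set (V0 - {l}))) u \<in> C"
      using V(2)[OF \<open>V0 \<in> P\<close>] aV0 by (auto intro!: foldr_mult_closed calg_unit_closed)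
    ultimately show ?thesis using phi_scale by simp
  qed
  moreover have "?f V = ?g V" if "V \<in> P - {V0}" for V
  proof -
    have "l \<notin> V" using that partition_on_block_unique[OF P _ \<open>V0 \<in> P\<close> _ \<open>l \<in> V0\<close>] by blast
    then show ?thesis by simp
  qed
  ultimately show ?thesis
    using prod.remove[OF \<open>finite P\<close> \<open>V0 \<in> P\<close>, of ?f] prod.remove[OF \<open>finite P\<close> \<open>V0 \<in> P\<close>, of ?g]
    by simp
qed

end

definition free_cumulant ::
  "('a \<Rightarrow> 'a \<Rightarrow> 'a) \<Rightarrow> 'a \<Rightarrow> ('a \<Rightarrow> complex) \<Rightarrow> nat \<Rightarrow> (nat \<Rightarrow> 'a) \<Rightarrow> complex" where
  "free_cumulant mu u phi n a =
     (\<Sum>P\<in>NC n. (\<Prod>V\<in>P. phi (foldr mu (map a (sorted_list_of_set V)) u)) * of_int (mobius_NC n P))"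

lemma cumulant_apply: "cumulant mu u phi n y j = free_cumulant (mu j) (u j) (phi j) n (\<lambda>l. y l j)"
  unfolding cumulant_def free_cumulant_def condE_def ordprodA_def by simp

lemma free_cumulant_scalar_arg_eq_0:
  assumes ncps: "nc_prob_space C ad mu sm z u phi" and "2 \<le> n" "l < n"
    and a: "\<And>k. k < n \<Longrightarrow> a k \<in> C" and "a l = sm \<alpha> u"
  shows "free_cumulant mu u phi n a = 0"
proof -
  have alg: "unital_calg C ad mu sm z u" and phi_scale: "\<And>c x. x \<in> C \<Longrightarrow> phi (sm c x) = c * phi x"
    and "phi u = 1"
    using ncps unfolding nc_prob_space_def by blast+
  define H where "H V = phi (foldr mu (map a (sorted_list_of_set (V - {l}))) u)" for V
  have "free_cumulant mu u phi n a = (\<Sum>P\<in>NC n. \<alpha> * (\<Prod>V\<in>P. H V) * of_int (mobius_NC n P))"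
    unfolding free_cumulant_def H_def
    using prod_blocks_pull_scalar[OF alg phi_scale NC_partition_on finite_atLeastLessThan] a
      \<open>l < n\<close> \<open>a l = sm \<alpha> u\<close>
    by (intro sum.cong) simp_all
  also have "\<dots> = \<alpha> * (\<Sum>P\<in>NC n. (\<Prod>V\<in>P. H V) * of_int (mobius_NC n P))"
    by (simp add: sum_distrib_left mult.assoc)
  also have "\<dots> = \<alpha> * 0"
    using sum_NC_prod_mobius_eq_0[OF \<open>2 \<le> n\<close> \<open>l < n\<close>, of H] \<open>phi u = 1\<close>
    by (simp add: H_def Diff_insert_absorb)
  finally show ?thesis by simp
qed

lemma gen_alg_D_coord_embed_closed:
  assumes alg: "\<And>i. unital_calg (C i) (ad i) (mu i) (sm i) (z i) (u i)"
    and "x \<in> gen_alg_D ad mu sm z u (coord_embed C z j)"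
  shows "x i \<in> C i"
  using assms(2)
proof induction
  case (gen x)
  then show ?case using calg_zero_closed[OF alg] by (cases "i = j") (auto simp: coord_embed_def)
qed (auto simp: embD_def intro: calg_zero_closed[OF alg] calg_unit_closed[OF alg]
  calg_add_closed[OF alg] calg_mult_closed[OF alg] calg_scale_closed[OF alg])

lemma gen_alg_D_coord_embed_scalar:
  assumes alg: "\<And>i. unital_calg (C i) (ad i) (mu i) (sm i) (z i) (u i)"
    and "x \<in> gen_alg_D ad mu sm z u (coord_embed C z j)" and "i \<noteq> j"
  shows "\<exists>\<alpha>. x i = sm i \<alpha> (u i)"
  using assms(2)
proof induction
  case (gen x)
  then have "x i = z i" using \<open>i \<noteq> j\<close> by (simp add: coord_embed_def)
  then show ?case using calg_scale_0[OF alg calg_unit_closed[OF alg]] by metis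
next
  case (scal d)
  then show ?case by (auto simp: embD_def)
next
  case zero
  then show ?case using calg_scale_0[OF alg calg_unit_closed[OF alg]] by metis
next
  case (add x y)
  then show ?case using calg_scale_add[OF alg calg_unit_closed[OF alg]] by metis
next
  case (mult x y)
  then show ?case using calg_scale_unit_mult[OF alg] by metis
next
  case (smul x c)
  then show ?case using calg_scale_scale[OF alg calg_unit_closed[OF alg]] by metis
qed

theorem mainTheorem5:
  fixes C :: "'i::finite \<Rightarrow> 'a set"
    and ad mu :: "'i \<Rightarrow> 'a \<Rightarrow> 'a \<Rightarrow> 'a"
    and sm :: "'i \<Rightarrow> complex \<Rightarrow> 'a \<Rightarrow> 'a"
    and z u :: "'i \<Rightarrow> 'a"
    and phi :: "'i \<Rightarrow> 'a \<Rightarrow> complex"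
  assumes "\<And>j. nc_prob_space (C j) (ad j) (mu j) (sm j) (z j) (u j) (phi j)"
  shows "free_over_D ad mu sm z u phi (coord_embed C z)"
  unfolding free_over_D_def
proof (intro allI impI ext)
  fix n and c :: "nat \<Rightarrow> 'i" and y j
  assume "(\<forall>l<n. y l \<in> gen_alg_D ad mu sm z u (coord_embed C z (c l)))
    \<and> (\<exists>l1<n. \<exists>l2<n. c l1 \<noteq> c l2)"
  then obtain l1 l2 where gen: "\<And>l. l < n \<Longrightarrow> y l \<in> gen_alg_D ad mu sm z u (coord_embed C z (c l))"
    and "l1 < n" "l2 < n" "c l1 \<noteq> c l2"
    by blast
  have alg: "\<And>j. unital_calg (C j) (ad j) (mu j) (sm j) (z j) (u j)"
    using assms unfolding nc_prob_space_def by blast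
  have "2 \<le> n" using \<open>l1 < n\<close> \<open>l2 < n\<close> \<open>c l1 \<noteq> c l2\<close> by (cases "l1 = l2") auto
  obtain l where "l < n" "j \<noteq> c l" using \<open>l1 < n\<close> \<open>l2 < n\<close> \<open>c l1 \<noteq> c l2\<close> by metis
  then obtain \<alpha> where "y l j = sm j \<alpha> (u j)"
    using gen_alg_D_coord_embed_scalar[OF alg gen] by blast
  show "cumulant mu u phi n y j = 0"
    unfolding cumulant_apply
    using gen_alg_D_coord_embed_closed[OF alg gen] \<open>y l j = sm j \<alpha> (u j)\<close>
    by (intro free_cumulant_scalar_arg_eq_0[OF assms \<open>2 \<le> n\<close> \<open>l < n\<close>]) simp_all
qed

end
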